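(* Let $(\mathcal{I},+,\times,0,1)$ be a commutative idempotent semiring and let $m,n\ge 1$ and $\alpha_1,\dots,\alpha_m,\beta_1,\dots,\beta_n\in\mathcal{I}$. Let $f=\prod_{i=1}^m(x+\alpha_i)=\sum_{k=0}^m a_k x^{m-k}$ and $g=\prod_{j=1}^n(x+\beta_j)=\sum_{k=0}^n b_k x^{n-k}$ in $\mathcal{I}[x]$, so that $a_0=b_0=1$, $a_k=\sum_{1\le i_1<\dots<i_k\le m}\alpha_{i_1}\cdots\alpha_{i_k}$ and $b_k=\sum_{1\le j_1<\dots<j_k\le n}\beta_{j_1}\cdots\beta_{j_k}$. Define the resultant $\mathbf{R}=\prod_{i=1}^m\prod_{j=1}^n(\alpha_i+\beta_j)\in\mathcal{I}$ and the Sylvester expression $\mathbf{S}=\operatorname{per}(M)=\sum_{\sigma\in \mathfrak{S}_{m+n}}\prod_{i=1}^{m+n}M_{i\sigma(i)}\in\mathcal{I}$, where $M$ is the $(m+n)\times(m+n)$ Sylvester matrix: for $1\le j\le n$, row $j$ of $M$ has entry $a_k$ in column $j+k$ ($0\le k\le m$) and $0$ elsewhere; for $1\le i\le m$, row $n+i$ has entry $b_k$ in column $i+k$ ($0\le k\le n$) and $0$ elsewhere. Then $\mathbf{R}=\mathbf{S}$.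
   Context: A commutative idempotent semiring is a set $\mathcal{I}$ with binary operations $+,\times$ and elements $0,1$ such that $+$ is commutative, associative, has identity $0$ and is idempotent ($a+a=a$); $\times$ is commutative, associative, has identity $1$, and $a\times 0=0$; and $(a+b)\times c=a\times c+b\times c$ for all $a,b,c$. *)

theory Defs
  imports "HOL-Combinatorics.Permutations"
begin

text \<open>Commutative idempotent semiring: commutative semiring with 1 (addition commutative,
associative, identity 0; multiplication commutative, associative, identity 1; 0 absorbing;
distributivity) plus idempotent addition. 0 \<noteq> 1 is NOT required.\<close>
class comm_idem_semiring = comm_semiring_0 + comm_monoid_mult +
  assumes add_idem: "a + a = a"

definition elem_sym :: "nat \<Rightarrow> (nat \<Rightarrow> 'a::comm_idem_semiring) \<Rightarrow> nat \<Rightarrow> 'a" where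
  "elem_sym m x k = (\<Sum>S\<in>{S. S \<subseteq> {1..m} \<and> card S = k}. \<Prod>i\<in>S. x i)"

definition sylvester :: "nat \<Rightarrow> nat \<Rightarrow> (nat \<Rightarrow> 'a::comm_idem_semiring) \<Rightarrow> (nat \<Rightarrow> 'a)
    \<Rightarrow> nat \<Rightarrow> nat \<Rightarrow> 'a" where
  "sylvester m n a b r c =
     (if 1 \<le> r \<and> r \<le> n then (if r \<le> c \<and> c \<le> r + m then a (c - r) else 0)
      else if n < r \<and> r \<le> n + m then
        (let i = r - n in if i \<le> c \<and> c \<le> i + n then b (c - i) else 0)
      else 0)"

definition per :: "nat \<Rightarrow> (nat \<Rightarrow> nat \<Rightarrow> 'a::comm_idem_semiring) \<Rightarrow> 'a" where
  "per N M = (\<Sum>\<sigma>\<in>{\<sigma>. \<sigma> permutes {1..N}}. \<Prod>i\<in>{1..N}. M i (\<sigma> i))"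

end

theory Submission
  imports Defs
begin

context comm_idem_semiring
begin

definition idem_le :: "'a \<Rightarrow> 'a \<Rightarrow> bool" (infix \<open>\<preceq>\<close> 50) where
  "x \<preceq> y \<longleftrightarrow> x + y = y"

lemma idem_le_refl [simp]: "x \<preceq> x"
  by (simp add: idem_le_def add_idem)

lemma idem_le_antisym: "x \<preceq> y \<Longrightarrow> y \<preceq> x \<Longrightarrow> x = y"
  by (simp add: idem_le_def add.commute)

lemma idem_le_trans [trans]:
  assumes "x \<preceq> y" "y \<preceq> z"
  shows "x \<preceq> z"
proof -
  have "x + z = (x + y) + z"
    using assms(2) by (simp add: idem_le_def add.assoc)
  then show ?thesis
    using assms by (simp add: idem_le_def)
qed

lemma zero_idem_le [simp]: "0 \<preceq> x"
  by (simp add: idem_le_def)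

lemma add_idem_mono: "x \<preceq> y \<Longrightarrow> x' \<preceq> y' \<Longrightarrow> x + x' \<preceq> y + y'"
proof -
  assume "x \<preceq> y" "x' \<preceq> y'"
  have "x + x' + (y + y') = (x + y) + (x' + y')" by (simp add: ac_simps)
  with \<open>x \<preceq> y\<close> \<open>x' \<preceq> y'\<close> show ?thesis by (simp add: idem_le_def)
qed

lemma idem_le_add1: "x \<preceq> x + y"
  unfolding idem_le_def by (simp add: add.assoc[symmetric] add_idem)

lemma idem_le_add2: "y \<preceq> x + y"
  using idem_le_add1[of y x] by (simp add: add.commute)

lemma mult_right_idem_mono: "x \<preceq> y \<Longrightarrow> x * z \<preceq> y * z"
  unfolding idem_le_def by (simp flip: distrib_right)

lemma mult_idem_mono: "x \<preceq> y \<Longrightarrow> x' \<preceq> y' \<Longrightarrow> x * x' \<preceq> y * y'"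
  using mult_right_idem_mono[of x y x'] mult_right_idem_mono[of x' y' y] idem_le_trans
  by (simp add: mult.commute)

lemma member_idem_le_sum: "finite A \<Longrightarrow> i \<in> A \<Longrightarrow> f i \<preceq> sum f A"
  by (metis sum.remove idem_le_add1)

lemma idem_le_sumI: "finite A \<Longrightarrow> i \<in> A \<Longrightarrow> x \<preceq> f i \<Longrightarrow> x \<preceq> sum f A"
  using idem_le_trans member_idem_le_sum by metis

lemma sum_idem_le: "(\<And>i. i \<in> A \<Longrightarrow> f i \<preceq> y) \<Longrightarrow> sum f A \<preceq> y"
proof (induction A rule: infinite_finite_induct)
  case (insert x F)
  then have "f x + sum f F \<preceq> y + y" by (intro add_idem_mono) auto
  with insert.hyps show ?case by (simp add: add_idem)
qed simp_all

lemma prod_idem_mono: "(\<And>i. i \<in> A \<Longrightarrow> f i \<preceq> g i) \<Longrightarrow> prod f A \<preceq> prod g A"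
proof (induction A rule: infinite_finite_induct)
  case (insert x F)
  then show ?case by (simp add: mult_idem_mono)
qed simp_all

lemma prod_eq_zeroI: "finite A \<Longrightarrow> a \<in> A \<Longrightarrow> f a = 0 \<Longrightarrow> prod f A = 0"
  by (metis prod.remove mult_zero_left)

lemma prod_add_Pow:
  assumes "finite A"
  shows "(\<Prod>x\<in>A. f x + g x) = (\<Sum>X\<in>Pow A. (\<Prod>x\<in>X. f x) * (\<Prod>x\<in>A - X. g x))"
  using assms
proof (induction A rule: finite_induct)
  case (insert x A)
  let ?t = "\<lambda>X. (\<Prod>y\<in>X. f y) * (\<Prod>y\<in>A - X. g y)"
  have split: "(\<Sum>X\<in>Pow (insert x A). (\<Prod>y\<in>X. f y) * (\<Prod>y\<in>insert x A - X. g y))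
      = (\<Sum>X\<in>Pow A. (\<Prod>y\<in>X. f y) * (\<Prod>y\<in>insert x A - X. g y))
        + (\<Sum>X\<in>Pow A. (\<Prod>y\<in>insert x X. f y) * (\<Prod>y\<in>insert x A - insert x X. g y))"
  proof -
    have "inj_on (insert x) (Pow A)" "Pow A \<inter> insert x ` Pow A = {}"
      using insert.hyps by (auto simp: inj_on_def)
    then show ?thesis
      unfolding Pow_insert using insert.hyps by (simp add: sum.union_disjoint sum.reindex)
  qed
  have g_out: "(\<Prod>y\<in>X. f y) * (\<Prod>y\<in>insert x A - X. g y) = g x * ?t X"
    and f_in: "(\<Prod>y\<in>insert x X. f y) * (\<Prod>y\<in>insert x A - insert x X. g y) = f x * ?t X"
    if X: "X \<in> Pow A" for X
  proof -
    have "finite X" "x \<notin> X" "insert x A - X = insert x (A - X)" "insert x A - insert x X = A - X"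
      using X insert.hyps finite_subset by auto
    then show "(\<Prod>y\<in>X. f y) * (\<Prod>y\<in>insert x A - X. g y) = g x * ?t X"
      and "(\<Prod>y\<in>insert x X. f y) * (\<Prod>y\<in>insert x A - insert x X. g y) = f x * ?t X"
      using insert.hyps by (simp_all add: mult_ac)
  qed
  have "(\<Prod>y\<in>insert x A. f y + g y) = (f x + g x) * (\<Sum>X\<in>Pow A. ?t X)"
    using insert by simp
  also have "\<dots> = (\<Sum>X\<in>Pow A. g x * ?t X) + (\<Sum>X\<in>Pow A. f x * ?t X)"
    by (simp add: distrib_right sum_distrib_left sum.distrib add.commute)
  also have "\<dots> = (\<Sum>X\<in>Pow (insert x A). (\<Prod>y\<in>X. f y) * (\<Prod>y\<in>insert x A - X. g y))"
    unfolding split by (intro arg_cong2[where f = "(+)"] sum.cong refl) (simp_all only: g_out f_in)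
  finally show ?case .
qed simp

end

lemma finite_card_subsets [simp]: "finite {S. S \<subseteq> {1..N::nat} \<and> card S = k}"
  by (rule finite_subset[of _ "Pow {1..N}"]) auto

lemma card_subsets_Suc:
  "{S. S \<subseteq> {1..Suc N} \<and> card S = Suc k}
   = {S. S \<subseteq> {1..N} \<and> card S = Suc k} \<union> insert (Suc N) ` {S. S \<subseteq> {1..N} \<and> card S = k}"
proof (intro equalityI subsetI)
  fix S assume S: "S \<in> {S. S \<subseteq> {1..Suc N} \<and> card S = Suc k}"
  then have "finite S" using finite_subset by blast
  show "S \<in> {S. S \<subseteq> {1..N} \<and> card S = Suc k} \<union> insert (Suc N) ` {S. S \<subseteq> {1..N} \<and> card S = k}"
  proof (cases "Suc N \<in> S")
    case True
    then have "S = insert (Suc N) (S - {Suc N})" "S - {Suc N} \<subseteq> {1..N}" "card (S - {Suc N}) = k"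
      using S \<open>finite S\<close> by auto
    then show ?thesis by blast
  next
    case False
    with S show ?thesis by (auto simp: subset_iff le_Suc_eq)
  qed
next
  fix S assume "S \<in> {S. S \<subseteq> {1..N} \<and> card S = Suc k} \<union> insert (Suc N) ` {S. S \<subseteq> {1..N} \<and> card S = k}"
  then consider "S \<subseteq> {1..N}" "card S = Suc k" | T where "T \<subseteq> {1..N}" "card T = k" "S = insert (Suc N) T"
    by blast
  then show "S \<in> {S. S \<subseteq> {1..Suc N} \<and> card S = Suc k}"
  proof cases
    case 2
    then have "finite T" "Suc N \<notin> T"
      using finite_subset by auto
    with 2 show ?thesis by auto
  qed auto
qed

lemma elem_sym_0 [simp]: "elem_sym N \<gamma> 0 = 1"
proof -
  have "{S. S \<subseteq> {1..N} \<and> card S = 0} = {{}}"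
    by (auto dest: finite_subset)
  then show ?thesis by (simp add: elem_sym_def)
qed

lemma elem_sym_eq_0: "N < k \<Longrightarrow> elem_sym N \<gamma> k = 0"
proof -
  assume "N < k"
  have "{S. S \<subseteq> {1..N} \<and> card S = k} = {}"
  proof (rule equals0I)
    fix S assume "S \<in> {S. S \<subseteq> {1..N} \<and> card S = k}"
    then have "k \<le> N" using card_mono[of "{1..N}" S] by auto
    with \<open>N < k\<close> show False by simp
  qed
  then show ?thesis
    unfolding elem_sym_def by (simp only: sum.empty)
qed

lemma elem_sym_Suc_Suc:
  "elem_sym (Suc N) \<gamma> (Suc k) = elem_sym N \<gamma> (Suc k) + \<gamma> (Suc N) * elem_sym N \<gamma> k"
proof -
  let ?A = "{S. S \<subseteq> {1..N} \<and> card S = Suc k}" and ?B = "{S. S \<subseteq> {1..N} \<and> card S = k}"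
  have new: "Suc N \<notin> S" "finite S" if "S \<subseteq> {1..N}" for S
    using that finite_subset by auto
  have "inj_on (insert (Suc N)) ?B"
    by (simp add: inj_on_def insert_ident new)
  moreover have "?A \<inter> insert (Suc N) ` ?B = {}"
    using new by auto
  ultimately have "elem_sym (Suc N) \<gamma> (Suc k) = elem_sym N \<gamma> (Suc k) + (\<Sum>S\<in>?B. prod \<gamma> (insert (Suc N) S))"
    unfolding elem_sym_def card_subsets_Suc by (simp add: sum.union_disjoint sum.reindex)
  also have "(\<Sum>S\<in>?B. prod \<gamma> (insert (Suc N) S)) = \<gamma> (Suc N) * elem_sym N \<gamma> k"
    unfolding elem_sym_def sum_distrib_left by (rule sum.cong) (simp_all add: new)
  finally show ?thesis .
qed

lemma elem_sym_Suc:
  "elem_sym (Suc N) \<gamma> k = elem_sym N \<gamma> k + (if k = 0 then 0 else \<gamma> (Suc N) * elem_sym N \<gamma> (k - 1))"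
  by (cases k) (simp_all add: elem_sym_Suc_Suc)

lemma prod_add_eq_elem_sym:
  "(\<Prod>t\<in>{1..N}. z + \<gamma> t) = (\<Sum>l\<in>{0..N}. z ^ (N - l) * elem_sym N \<gamma> l)"
proof (induction N)
  case (Suc N)
  let ?e = "elem_sym N \<gamma>" and ?x = "\<gamma> (Suc N)"
  have "(\<Sum>l\<in>{0..Suc N}. z ^ (Suc N - l) * elem_sym (Suc N) \<gamma> l)
      = (\<Sum>l\<in>{0..Suc N}. z ^ (Suc N - l) * ?e l)
        + (\<Sum>l\<in>{0..Suc N}. z ^ (Suc N - l) * (if l = 0 then 0 else ?x * ?e (l - 1)))"
    by (simp add: elem_sym_Suc distrib_left sum.distrib)
  also have "(\<Sum>l\<in>{0..Suc N}. z ^ (Suc N - l) * ?e l) = z * (\<Sum>l\<in>{0..N}. z ^ (N - l) * ?e l)"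
    unfolding sum_distrib_left
    by (auto simp: sum.atLeast0_atMost_Suc elem_sym_eq_0 Suc_diff_le mult.assoc intro!: sum.cong)
  also have "(\<Sum>l\<in>{0..Suc N}. z ^ (Suc N - l) * (if l = 0 then 0 else ?x * ?e (l - 1)))
      = (\<Sum>l\<in>{0..N}. z ^ (N - l) * (?x * ?e l))"
    by (subst sum.atLeast0_atMost_Suc_shift) simp
  also have "\<dots> = ?x * (\<Sum>l\<in>{0..N}. z ^ (N - l) * ?e l)"
    by (simp add: sum_distrib_left mult_ac)
  finally show ?case
    using Suc by (simp add: distrib_right mult.commute)
qed simp

lemma elem_sym_le_Suc: "elem_sym N \<gamma> k \<preceq> elem_sym (Suc N) \<gamma> k"
  by (simp add: elem_sym_Suc idem_le_add1)

lemma mult_elem_sym_le_Suc: "\<gamma> (Suc N) * elem_sym N \<gamma> k \<preceq> elem_sym (Suc N) \<gamma> (Suc k)"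
  by (simp add: elem_sym_Suc_Suc idem_le_add2)

definition log_concave :: "(nat \<Rightarrow> 'a::comm_idem_semiring) \<Rightarrow> bool" where
  "log_concave c \<longleftrightarrow> (\<forall>x y. y < x \<longrightarrow> c x * c y \<preceq> c (x - 1) * c (Suc y))"

lemma log_concave_elem_sym: "log_concave (elem_sym N \<gamma>)"
  unfolding log_concave_def
proof (intro allI impI)
  fix x y :: nat assume "y < x"
  let ?F = "\<lambda>k. {S. S \<subseteq> {1..N} \<and> card S = k}"
  show "elem_sym N \<gamma> x * elem_sym N \<gamma> y \<preceq> elem_sym N \<gamma> (x - 1) * elem_sym N \<gamma> (Suc y)"
    unfolding elem_sym_def sum_product
  proof (intro sum_idem_le)
    fix A B assume A: "A \<in> ?F x" and B: "B \<in> ?F y"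
    then have "finite A" "finite B"
      using finite_subset by auto
    have "\<not> A \<subseteq> B"
    proof
      assume "A \<subseteq> B"
      then have "card A \<le> card B" using \<open>finite B\<close> by (rule card_mono[rotated])
      with A B \<open>y < x\<close> show False by simp
    qed
    then obtain t where t: "t \<in> A" "t \<notin> B" by auto
    have A': "A - {t} \<in> ?F (x - 1)" and B': "insert t B \<in> ?F (Suc y)"
      using A B t \<open>finite A\<close> \<open>finite B\<close> by auto
    have "prod \<gamma> A * prod \<gamma> B = prod \<gamma> (A - {t}) * prod \<gamma> (insert t B)"
      using t \<open>finite A\<close> \<open>finite B\<close> by (simp add: prod.remove[of A t] mult_ac)
    also have "\<dots> \<preceq> (\<Sum>S\<in>?F (x - 1). \<Sum>T\<in>?F (Suc y). prod \<gamma> S * prod \<gamma> T)"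
      by (rule idem_le_sumI[OF finite_card_subsets A'], rule member_idem_le_sum[OF finite_card_subsets B'])
    finally show "prod \<gamma> A * prod \<gamma> B \<preceq> (\<Sum>S\<in>?F (x - 1). \<Sum>T\<in>?F (Suc y). prod \<gamma> S * prod \<gamma> T)" .
  qed
qed

lemma log_concave_spread:
  assumes "log_concave c" "d \<le> x - y"
  shows "c x * c y \<preceq> c (x - d) * c (y + d)"
proof -
  have half: "c x * c y \<preceq> c (x - d) * c (y + d)" if "d + d \<le> x - y" for d
    using that
  proof (induction d)
    case (Suc d)
    then have "c x * c y \<preceq> c (x - d) * c (y + d)" by simp
    also have "\<dots> \<preceq> c (x - d - 1) * c (Suc (y + d))"
      using assms(1) Suc.prems unfolding log_concave_def by (simp del: diff_diff_left)
    finally show ?case by simp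
  qed simp
  show ?thesis
  proof (cases "d + d \<le> x - y")
    case False
    then have "c x * c y \<preceq> c (x - (x - y - d)) * c (y + (x - y - d))"
      by (intro half) simp
    moreover have "x - (x - y - d) = y + d" "y + (x - y - d) = x - d"
      using False assms(2) by simp_all
    ultimately show ?thesis by (simp add: mult.commute)
  qed (rule half)
qed

lemma log_concave_cross:
  assumes "log_concave c" "r \<le> s" "s \<le> u" "u \<le> v"
  shows "c (v - r) * c (u - s) \<preceq> c (u - r) * c (v - s)"
proof -
  have "c (v - r) * c (u - s) \<preceq> c (v - r - (s - r)) * c (u - s + (s - r))"
    using assms by (intro log_concave_spread) simp_all
  moreover have "v - r - (s - r) = v - s" "u - s + (s - r) = u - r"
    using assms by simp_all
  ultimately show ?thesis by (simp add: mult.commute)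
qed

lemma log_concave_step:
  assumes "log_concave c" "1 \<le> x" "x \<le> y"
  shows "c (x - 1) * c y \<preceq> c x * c (y - 1)"
proof -
  have "x - 1 < y"
    using assms by simp
  then have "c y * c (x - 1) \<preceq> c (y - 1) * c (Suc (x - 1))"
    using assms(1) unfolding log_concave_def by blast
  with assms(2) show ?thesis
    by (simp add: mult.commute)
qed

lemma log_concave_prod_swap:
  assumes c: "log_concave c" and I: "finite I" "r \<in> I" "s \<in> I"
    and "r \<le> s" "s \<le> f s" and max: "\<forall>t\<in>I. f t \<le> f r"
  shows "(\<Prod>t\<in>I. c (f t - t)) \<preceq> (\<Prod>t\<in>I. c (Fun.swap r s f t - t))"
proof (cases "r = s")
  case False
  have split: "prod h I = h r * h s * prod h (I - {r} - {s})" for h :: "nat \<Rightarrow> 'a"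
  proof -
    have "prod h I = h r * prod h (I - {r})"
      by (rule prod.remove[OF I(1,2)])
    also have "prod h (I - {r}) = h s * prod h (I - {r} - {s})"
      using I False by (intro prod.remove) auto
    finally show ?thesis by (simp add: mult.assoc)
  qed
  have "c (f r - r) * c (f s - s) \<preceq> c (f s - r) * c (f r - s)"
    using assms by (intro log_concave_cross) auto
  moreover have "(\<Prod>t\<in>I - {r} - {s}. c (Fun.swap r s f t - t)) = (\<Prod>t\<in>I - {r} - {s}. c (f t - t))"
    by (rule prod.cong) auto
  ultimately show ?thesis
    unfolding split[of "\<lambda>t. c (f t - t)"] split[of "\<lambda>t. c (Fun.swap r s f t - t)"]
    using False by (simp add: mult_right_idem_mono)
qed simp

lemma log_concave_prod_move_max:
  assumes c: "log_concave c" and inj: "inj_on f {1..Suc n}" and ge: "\<forall>r\<in>{1..Suc n}. r \<le> f r"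
  obtains f' where "inj_on f' {1..Suc n}" "f' ` {1..Suc n} = f ` {1..Suc n}"
    "\<forall>r\<in>{1..Suc n}. f' r \<le> f' (Suc n)" "\<forall>r\<in>{1..n}. r \<le> f' r"
    "(\<Prod>r\<in>{1..Suc n}. c (f r - r)) \<preceq> (\<Prod>r\<in>{1..Suc n}. c (f' r - r))"
proof -
  let ?I = "{1..Suc n}"
  have "Max (f ` ?I) \<in> f ` ?I"
    by (rule Max_in) auto
  then obtain r0 where r0: "Max (f ` ?I) = f r0" "r0 \<in> ?I"
    by (rule imageE)
  have max: "\<forall>t\<in>?I. f t \<le> f r0"
    using r0(1)[symmetric] by simp
  note r0 = r0(2)
  have Sn: "Suc n \<in> ?I"
    by simp
  define f' where "f' = Fun.swap r0 (Suc n) f"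
  have "inj_on f' ?I"
    unfolding f'_def using inj r0 Sn by (rule inj_on_imp_inj_on_swap)
  moreover have img: "f' ` ?I = f ` ?I"
    unfolding f'_def using r0 Sn by (rule swap_image_eq)
  moreover have "\<forall>r\<in>?I. f' r \<le> f' (Suc n)"
  proof
    fix r assume "r \<in> ?I"
    then have "f' r \<in> f ` ?I"
      unfolding img[symmetric] by (rule imageI)
    then obtain t where "f' r = f t" "t \<in> ?I"
      by (rule imageE)
    with max show "f' r \<le> f' (Suc n)"
      by (simp add: f'_def)
  qed
  moreover have "\<forall>r\<in>{1..n}. r \<le> f' r"
  proof
    fix r assume r: "r \<in> {1..n}"
    have "Suc n \<le> f (Suc n)"
      using bspec[OF ge Sn] .
    then have "r \<le> f (Suc n)"
      using r by simp
    moreover have "r \<le> f r"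
      using r ge by simp
    ultimately show "r \<le> f' r"
      using r by (cases "r = r0") (simp_all add: f'_def)
  qed
  moreover have "(\<Prod>r\<in>?I. c (f r - r)) \<preceq> (\<Prod>r\<in>?I. c (f' r - r))"
    unfolding f'_def using c r0 Sn max bspec[OF ge Sn] by (intro log_concave_prod_swap) simp_all
  ultimately show thesis
    by (rule that)
qed

lemma log_concave_prod_sort:
  assumes c: "log_concave c"
  shows "inj_on f {1..n} \<Longrightarrow> \<forall>r\<in>{1..n}. r \<le> f r \<Longrightarrow>
    \<exists>g. strict_mono_on {1..n} g \<and> g ` {1..n} = f ` {1..n} \<and>
        (\<Prod>r\<in>{1..n}. c (f r - r)) \<preceq> (\<Prod>r\<in>{1..n}. c (g r - r))"
proof (induction n arbitrary: f)
  case 0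
  then show ?case by (auto simp: strict_mono_on_def)
next
  case (Suc n)
  obtain f' where inj': "inj_on f' {1..Suc n}" and img': "f' ` {1..Suc n} = f ` {1..Suc n}"
    and last: "\<forall>r\<in>{1..Suc n}. f' r \<le> f' (Suc n)" and ge': "\<forall>r\<in>{1..n}. r \<le> f' r"
    and le': "(\<Prod>r\<in>{1..Suc n}. c (f r - r)) \<preceq> (\<Prod>r\<in>{1..Suc n}. c (f' r - r))"
    using log_concave_prod_move_max[OF c Suc.prems] .
  have "inj_on f' {1..n}"
    using inj' by (rule inj_on_subset) auto
  from Suc.IH[OF this ge'] obtain g where g: "strict_mono_on {1..n} g" "g ` {1..n} = f' ` {1..n}"
      "(\<Prod>r\<in>{1..n}. c (f' r - r)) \<preceq> (\<Prod>r\<in>{1..n}. c (g r - r))"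
    by blast
  have below: "g r < f' (Suc n)" if "r \<in> {1..n}" for r
  proof -
    have "g r \<in> f' ` {1..n}"
      unfolding g(2)[symmetric] using that by (rule imageI)
    then obtain t where t: "g r = f' t" "t \<in> {1..n}"
      by (rule imageE)
    then have "f' t \<noteq> f' (Suc n)"
      using inj_onD[OF inj', of t "Suc n"] by auto
    with t last show ?thesis
      by (simp add: le_neq_implies_less)
  qed
  define g' where "g' = g(Suc n := f' (Suc n))"
  have g'_below: "\<And>r. r \<in> {1..n} \<Longrightarrow> g' r = g r" and g'_last: "g' (Suc n) = f' (Suc n)"
    by (simp_all add: g'_def)
  have I_eq: "{1..Suc n} = insert (Suc n) {1..n}"
    by auto
  have "strict_mono_on {1..Suc n} g'"
    using g(1) below by (auto simp: strict_mono_on_def g'_def)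
  moreover have "g' ` {1..n} = g ` {1..n}"
    using g'_below by (rule image_cong[OF refl])
  then have "g' ` {1..Suc n} = f ` {1..Suc n}"
    using g(2) img' unfolding I_eq by (simp add: g'_last)
  moreover have "(\<Prod>r\<in>{1..n}. c (g' r - r)) = (\<Prod>r\<in>{1..n}. c (g r - r))"
    by (rule prod.cong) (simp_all add: g'_below)
  then have "(\<Prod>r\<in>{1..Suc n}. c (f' r - r)) \<preceq> (\<Prod>r\<in>{1..Suc n}. c (g' r - r))"
    using g(3) unfolding I_eq by (simp add: g'_last mult_idem_mono)
  ultimately show ?case
    using le' idem_le_trans by blast
qed

lemma strict_mono_on_image_less:
  fixes g :: "nat \<Rightarrow> nat"
  assumes "strict_mono_on {1..n} g" "r \<in> {1..n}"
  shows "{x \<in> g ` {1..n}. x < g r} = g ` {1..r - 1}"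
proof -
  have "{x \<in> g ` {1..n}. x < g r} = g ` {s \<in> {1..n}. s < r}"
    using strict_mono_on_less[OF assms(1) _ assms(2)] by auto
  also have "{s \<in> {1..n}. s < r} = {1..r - 1}"
    using assms(2) by auto
  finally show ?thesis .
qed

lemma card_strict_mono_on_image_less:
  fixes g :: "nat \<Rightarrow> nat"
  assumes "strict_mono_on {1..n} g" "r \<in> {1..n}"
  shows "card {x \<in> g ` {1..n}. x < g r} = r - 1"
proof -
  have "inj_on g {1..r - 1}"
    using strict_mono_on_imp_inj_on[OF assms(1)] by (rule inj_on_subset) (use assms(2) in auto)
  then show ?thesis
    unfolding strict_mono_on_image_less[OF assms] by (simp add: card_image)
qed

lemma less_strict_mono_on_iff_card_less:
  fixes q :: "nat \<Rightarrow> nat"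
  assumes q: "strict_mono_on {1..m} q" and i: "i \<in> {1..m}" and x: "x \<notin> q ` {1..m}"
  shows "x < q i \<longleftrightarrow> card {y \<in> q ` {1..m}. y < x} < i"
proof
  assume "x < q i"
  then have "{y \<in> q ` {1..m}. y < x} \<subseteq> {y \<in> q ` {1..m}. y < q i}"
    by auto
  then have "card {y \<in> q ` {1..m}. y < x} \<le> card {y \<in> q ` {1..m}. y < q i}"
    by (simp add: card_mono)
  also have "\<dots> = i - 1"
    by (rule card_strict_mono_on_image_less[OF q i])
  finally show "card {y \<in> q ` {1..m}. y < x} < i"
    using i by simp linarith
next
  assume less: "card {y \<in> q ` {1..m}. y < x} < i"
  show "x < q i"
  proof (rule ccontr)
    assume "\<not> x < q i"
    moreover have "x \<noteq> q i"
      using x i by blast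
    ultimately have "q i < x" by simp
    have "q ` {1..i} \<subseteq> {y \<in> q ` {1..m}. y < x}"
    proof
      fix y assume "y \<in> q ` {1..i}"
      then obtain j where j: "y = q j" "j \<in> {1..i}"
        by (rule imageE)
      then have "j \<in> {1..m}" "q j \<le> q i"
        using i strict_mono_on_leD[OF q, of j i] by auto
      with j \<open>q i < x\<close> show "y \<in> {y \<in> q ` {1..m}. y < x}"
        by auto
    qed
    then have "card (q ` {1..i}) \<le> card {y \<in> q ` {1..m}. y < x}"
      by (rule card_mono[rotated]) simp
    moreover have "card (q ` {1..i}) = i"
      using strict_mono_on_imp_inj_on[OF q] i by (subst card_image) (auto intro: inj_on_subset)
    ultimately show False
      using less by simp
  qed
qed

lemma card_less_partition:
  assumes "P \<union> Q = {1..N}" "P \<inter> Q = {}" "x \<in> {1..N}"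
  shows "x - 1 = card {y \<in> P. y < x} + card {y \<in> Q. y < x}"
proof -
  have "P \<subseteq> {1..N}" "Q \<subseteq> {1..N}"
    using assms(1) by auto
  then have "{1..x - 1} = {y \<in> P. y < x} \<union> {y \<in> Q. y < x}"
    using assms(1,3) by auto
  then have "x - 1 = card ({y \<in> P. y < x} \<union> {y \<in> Q. y < x})"
    by (metis card_atLeastAtMost diff_Suc_1)
  also have "\<dots> = card {y \<in> P. y < x} + card {y \<in> Q. y < x}"
    by (rule card_Un_disjoint) (use assms(2) in auto)
  finally show ?thesis .
qed

definition count_less :: "nat \<Rightarrow> (nat \<Rightarrow> nat) \<Rightarrow> nat \<Rightarrow> nat" where
  "count_less n k i = card {r \<in> {1..n}. k r < i}"

definition merge_patterns :: "nat \<Rightarrow> nat \<Rightarrow> (nat \<Rightarrow> nat) set" where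
  "merge_patterns m n = {1..n} \<rightarrow>\<^sub>E {0..m}"

definition mono_merge_patterns :: "nat \<Rightarrow> nat \<Rightarrow> (nat \<Rightarrow> nat) set" where
  "mono_merge_patterns m n = {k \<in> merge_patterns m n. mono_on {1..n} k}"

definition merge_term ::
    "nat \<Rightarrow> nat \<Rightarrow> (nat \<Rightarrow> 'a::comm_idem_semiring) \<Rightarrow> (nat \<Rightarrow> 'a) \<Rightarrow> (nat \<Rightarrow> nat) \<Rightarrow> 'a" where
  "merge_term m n a b k = (\<Prod>r\<in>{1..n}. a (k r)) * (\<Prod>i\<in>{1..m}. b (count_less n k i))"

definition merge_sum :: "nat \<Rightarrow> nat \<Rightarrow> (nat \<Rightarrow> 'a::comm_idem_semiring) \<Rightarrow> (nat \<Rightarrow> 'a) \<Rightarrow> 'a" where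
  "merge_sum m n a b = (\<Sum>k\<in>merge_patterns m n. merge_term m n a b k)"

definition mono_merge_sum :: "nat \<Rightarrow> nat \<Rightarrow> (nat \<Rightarrow> 'a::comm_idem_semiring) \<Rightarrow> (nat \<Rightarrow> 'a) \<Rightarrow> 'a" where
  "mono_merge_sum m n a b = (\<Sum>k\<in>mono_merge_patterns m n. merge_term m n a b k)"

definition merge_perm :: "nat \<Rightarrow> nat \<Rightarrow> (nat \<Rightarrow> nat) \<Rightarrow> nat \<Rightarrow> nat" where
  "merge_perm m n k x =
     (if x \<in> {1..n} then x + k x else if x \<in> {n + 1..n + m} then x - n + count_less n k (x - n) else x)"

lemma finite_merge_patterns [simp]: "finite (merge_patterns m n)"
  by (simp add: merge_patterns_def finite_PiE)

lemma finite_mono_merge_patterns [simp]: "finite (mono_merge_patterns m n)"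
  by (simp add: mono_merge_patterns_def)

lemma count_less_le: "count_less n k i \<le> n"
proof -
  have "card {r \<in> {1..n}. k r < i} \<le> card {1..n}"
    by (rule card_mono) auto
  then show ?thesis by (simp add: count_less_def)
qed

lemma count_less_mono: "i \<le> j \<Longrightarrow> count_less n k i \<le> count_less n k j"
  unfolding count_less_def by (rule card_mono) auto

lemma add_count_less_neq:
  assumes k: "mono_on {1..n} k" and r: "r \<in> {1..n}"
  shows "r + k r \<noteq> i + count_less n k i"
proof (cases "k r < i")
  case True
  have "{1..r} \<subseteq> {r' \<in> {1..n}. k r' < i}"
    using r True monotone_onD[OF k] by fastforce
  then have "r \<le> count_less n k i"
    unfolding count_less_def using card_mono[of "{r' \<in> {1..n}. k r' < i}" "{1..r}"] by simp
  with True show ?thesis by linarith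
next
  case False
  have "{r' \<in> {1..n}. k r' < i} \<subseteq> {1..r - 1}"
  proof
    fix r' assume r': "r' \<in> {r' \<in> {1..n}. k r' < i}"
    have "\<not> r \<le> r'"
      using r r' False monotone_onD[OF k, of r r'] by auto
    with r' show "r' \<in> {1..r - 1}" by auto
  qed
  then have "count_less n k i \<le> r - 1"
    unfolding count_less_def using card_mono[of "{1..r - 1}"] by fastforce
  with False r show ?thesis by auto
qed

lemma atLeastAtMost_add_split_image: "{1..m + n} = {1..n} \<union> (\<lambda>i. n + i) ` {1..m::nat}"
  by (simp add: set_eq_iff) presburger

lemma prod_atLeastAtMost_add_split:
  fixes h :: "nat \<Rightarrow> 'a::comm_monoid_mult"
  shows "(\<Prod>i\<in>{1..m + n}. h i) = (\<Prod>r\<in>{1..n}. h r) * (\<Prod>i\<in>{1..m}. h (n + i))"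
  using prod.ub_add_nat[of 1 n h m] prod.shift_bounds_cl_nat_ivl[of h 1 n m]
  by (simp add: add.commute)

lemma sylvester_upper:
  "r \<in> {1..n} \<Longrightarrow> sylvester m n a b r c = (if r \<le> c \<and> c \<le> r + m then a (c - r) else 0)"
  by (simp add: sylvester_def)

lemma sylvester_lower:
  "i \<in> {1..m} \<Longrightarrow> sylvester m n a b (n + i) c = (if i \<le> c \<and> c \<le> i + n then b (c - i) else 0)"
  by (simp add: sylvester_def Let_def)

lemma merge_patterns_le:
  assumes "k \<in> merge_patterns m n" "r \<in> {1..n}"
  shows "k r \<le> m"
  using PiE_mem[OF assms(1)[unfolded merge_patterns_def] assms(2)] by simp

lemma merge_perm_upper: "r \<in> {1..n} \<Longrightarrow> merge_perm m n k r = r + k r"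
  by (simp add: merge_perm_def)

lemma merge_perm_lower: "i \<in> {1..m} \<Longrightarrow> merge_perm m n k (n + i) = i + count_less n k i"
  by (simp add: merge_perm_def)

lemma merge_perm_permutes:
  assumes "k \<in> mono_merge_patterns m n"
  shows "merge_perm m n k permutes {1..m + n}"
proof -
  have k: "k \<in> merge_patterns m n" and k_mono: "mono_on {1..n} k"
    using assms by (simp_all add: mono_merge_patterns_def)
  note k_le = merge_patterns_le[OF k]
  let ?\<sigma> = "merge_perm m n k"
  have upper: "strict_mono_on {1..n} (\<lambda>r. r + k r)"
    using k_mono by (auto simp: monotone_on_def intro: add_less_le_mono)
  have lower: "strict_mono_on {1..m} (\<lambda>i. i + count_less n k i)"
    by (auto simp: monotone_on_def intro!: add_less_le_mono count_less_mono)
  note blocks = atLeastAtMost_add_split_image[of m n]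
  have inj: "inj_on ?\<sigma> {1..m + n}"
    unfolding blocks inj_on_Un
  proof (intro conjI)
    show "inj_on ?\<sigma> {1..n}"
      using strict_mono_on_imp_inj_on[OF upper]
      by (subst inj_on_cong[where g = "\<lambda>r. r + k r"]) (simp_all add: merge_perm_upper)
    show "inj_on ?\<sigma> ((\<lambda>i. n + i) ` {1..m})"
      using strict_mono_on_imp_inj_on[OF lower]
      by (intro inj_on_imageI, subst inj_on_cong) (simp_all add: merge_perm_lower)
    have "?\<sigma> r \<noteq> ?\<sigma> (n + i)" if "r \<in> {1..n}" "i \<in> {1..m}" for r i
      using add_count_less_neq[OF k_mono that(1)] that by (simp add: merge_perm_upper merge_perm_lower)
    then show "?\<sigma> ` ({1..n} - (\<lambda>i. n + i) ` {1..m}) \<inter> ?\<sigma> ` ((\<lambda>i. n + i) ` {1..m} - {1..n}) = {}"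
      by blast
  qed
  have "?\<sigma> r \<in> {1..m + n}" if "r \<in> {1..n}" for r
    using k_le[OF that] that by (simp add: merge_perm_upper)
  moreover have "?\<sigma> (n + i) \<in> {1..m + n}" if "i \<in> {1..m}" for i
    using count_less_le[of n k i] that by (simp add: merge_perm_lower)
  ultimately have "?\<sigma> ` {1..m + n} \<subseteq> {1..m + n}"
    by (subst (1) blocks) blast
  with inj have "bij_betw ?\<sigma> {1..m + n} {1..m + n}"
    by (simp add: bij_betw_def endo_inj_surj)
  then show ?thesis
    by (rule bij_imp_permutes) (auto simp: merge_perm_def)
qed

lemma sylvester_merge_perm:
  assumes "k \<in> merge_patterns m n"
  shows "(\<Prod>i\<in>{1..m + n}. sylvester m n a b i (merge_perm m n k i)) = merge_term m n a b k"
proof -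
  have "k r \<le> m" if "r \<in> {1..n}" for r
    using assms that by (rule merge_patterns_le)
  then have "(\<Prod>r\<in>{1..n}. sylvester m n a b r (merge_perm m n k r)) = (\<Prod>r\<in>{1..n}. a (k r))"
    by (intro prod.cong) (simp_all add: sylvester_upper merge_perm_upper)
  moreover have "(\<Prod>i\<in>{1..m}. sylvester m n a b (n + i) (merge_perm m n k (n + i)))
      = (\<Prod>i\<in>{1..m}. b (count_less n k i))"
    using count_less_le[of n k] by (intro prod.cong) (simp_all add: sylvester_lower merge_perm_lower)
  ultimately show ?thesis
    unfolding prod_atLeastAtMost_add_split[of _ m n] merge_term_def by simp
qed

lemma mono_merge_sum_le_per: "mono_merge_sum m n a b \<preceq> per (m + n) (sylvester m n a b)"
  unfolding mono_merge_sum_def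
proof (rule sum_idem_le)
  fix k assume k: "k \<in> mono_merge_patterns m n"
  have "merge_perm m n k \<in> {\<sigma>. \<sigma> permutes {1..m + n}}"
    using merge_perm_permutes[OF k] by simp
  then have "(\<Prod>i\<in>{1..m + n}. sylvester m n a b i (merge_perm m n k i)) \<preceq> per (m + n) (sylvester m n a b)"
    unfolding per_def by (rule member_idem_le_sum[OF finite_permutations, rotated]) simp
  moreover have "k \<in> merge_patterns m n"
    using k by (simp add: mono_merge_patterns_def)
  ultimately show "merge_term m n a b k \<preceq> per (m + n) (sylvester m n a b)"
    by (simp only: sylvester_merge_perm)
qed

lemma strict_mono_partition_offset:
  fixes p :: "nat \<Rightarrow> nat"
  assumes p: "strict_mono_on {1..n} p" and cover: "p ` {1..n} \<union> Q = {1..N}"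
    and disj: "p ` {1..n} \<inter> Q = {}" and r: "r \<in> {1..n}"
  shows "p r = r + card {y \<in> Q. y < p r}"
proof -
  have "p r \<in> {1..N}"
    using cover r by blast
  then have "p r - 1 = card {y \<in> p ` {1..n}. y < p r} + card {y \<in> Q. y < p r}"
    using card_less_partition[OF cover disj] by blast
  moreover have "card {y \<in> p ` {1..n}. y < p r} = r - 1"
    by (rule card_strict_mono_on_image_less[OF p r])
  ultimately show ?thesis
    using r \<open>p r \<in> {1..N}\<close> by simp linarith
qed

lemma merge_pattern_of_partition:
  fixes p q :: "nat \<Rightarrow> nat"
  assumes p: "strict_mono_on {1..n} p" and q: "strict_mono_on {1..m} q"
    and cover: "p ` {1..n} \<union> q ` {1..m} = {1..m + n}" and disj: "p ` {1..n} \<inter> q ` {1..m} = {}"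
  defines "k \<equiv> restrict (\<lambda>r. p r - r) {1..n}"
  shows "k \<in> merge_patterns m n" and "\<And>i. i \<in> {1..m} \<Longrightarrow> q i - i = count_less n k i"
proof -
  have k_eq: "k r = card {y \<in> q ` {1..m}. y < p r}" if "r \<in> {1..n}" for r
    using strict_mono_partition_offset[OF p cover disj that] that by (simp add: k_def)
  have "k r \<le> m" if "r \<in> {1..n}" for r
  proof -
    have "card {y \<in> q ` {1..m}. y < p r} \<le> card (q ` {1..m})"
      by (rule card_mono) auto
    also have "\<dots> \<le> m"
      using card_image_le[of "{1..m}" q] by simp
    finally show ?thesis
      using k_eq[OF that] by simp
  qed
  then show "k \<in> merge_patterns m n"
    by (auto simp: merge_patterns_def k_def)
  fix i assume i: "i \<in> {1..m}"
  have "q i = i + card {y \<in> p ` {1..n}. y < q i}"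
    using strict_mono_partition_offset[OF q _ _ i, of "p ` {1..n}" "m + n"] cover disj
    by (simp add: Un_commute Int_commute)
  moreover have "card {y \<in> p ` {1..n}. y < q i} = card {r \<in> {1..n}. p r < q i}"
  proof -
    have "{y \<in> p ` {1..n}. y < q i} = p ` {r \<in> {1..n}. p r < q i}"
      by auto
    moreover have "inj_on p {r \<in> {1..n}. p r < q i}"
      using strict_mono_on_imp_inj_on[OF p] by (rule inj_on_subset) auto
    ultimately show ?thesis
      by (simp add: card_image)
  qed
  moreover have "p r < q i \<longleftrightarrow> k r < i" if r: "r \<in> {1..n}" for r
  proof -
    have "p r \<notin> q ` {1..m}"
      using disj r by blast
    with k_eq[OF r] show ?thesis
      by (simp add: less_strict_mono_on_iff_card_less[OF q i])
  qed
  ultimately show "q i - i = count_less n k i"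
    by (simp add: count_less_def cong: conj_cong)
qed

lemma prod_partition_le_merge_sum:
  fixes p q :: "nat \<Rightarrow> nat"
  assumes p: "strict_mono_on {1..n} p" and q: "strict_mono_on {1..m} q"
    and cover: "p ` {1..n} \<union> q ` {1..m} = {1..m + n}" and disj: "p ` {1..n} \<inter> q ` {1..m} = {}"
  shows "(\<Prod>r\<in>{1..n}. a (p r - r)) * (\<Prod>i\<in>{1..m}. b (q i - i)) \<preceq> merge_sum m n a b"
proof -
  define k where "k = restrict (\<lambda>r. p r - r) {1..n}"
  have k: "k \<in> merge_patterns m n" and q_k: "\<And>i. i \<in> {1..m} \<Longrightarrow> q i - i = count_less n k i"
    using merge_pattern_of_partition[OF p q cover disj] by (simp_all add: k_def)
  have "(\<Prod>r\<in>{1..n}. a (p r - r)) = (\<Prod>r\<in>{1..n}. a (k r))"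
    by (intro prod.cong) (simp_all add: k_def)
  moreover have "(\<Prod>i\<in>{1..m}. b (q i - i)) = (\<Prod>i\<in>{1..m}. b (count_less n k i))"
    by (intro prod.cong) (simp_all add: q_k)
  moreover have "merge_term m n a b k \<preceq> merge_sum m n a b"
    unfolding merge_sum_def using k by (rule member_idem_le_sum[OF finite_merge_patterns])
  ultimately show ?thesis
    by (simp add: merge_term_def)
qed

lemma permutes_block_images:
  fixes \<sigma> :: "nat \<Rightarrow> nat"
  assumes "\<sigma> permutes {1..m + n}"
  shows "\<sigma> ` {1..n} \<union> (\<lambda>i. \<sigma> (n + i)) ` {1..m} = {1..m + n}"
    and "\<sigma> ` {1..n} \<inter> (\<lambda>i. \<sigma> (n + i)) ` {1..m} = {}"
proof -
  have "\<sigma> ` {1..m + n} = \<sigma> ` {1..n} \<union> (\<lambda>i. \<sigma> (n + i)) ` {1..m}"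
    by (subst atLeastAtMost_add_split_image[of m n]) (simp only: image_Un image_image)
  then show "\<sigma> ` {1..n} \<union> (\<lambda>i. \<sigma> (n + i)) ` {1..m} = {1..m + n}"
    using permutes_image[OF assms] by simp
  have "\<sigma> r \<noteq> \<sigma> (n + i)" if "r \<in> {1..n}" "i \<in> {1..m}" for r i
    using that by (simp add: inj_eq[OF permutes_inj[OF assms]])
  then show "\<sigma> ` {1..n} \<inter> (\<lambda>i. \<sigma> (n + i)) ` {1..m} = {}"
    by blast
qed

lemma sylvester_perm_prod_le_merge_sum:
  assumes a: "log_concave a" and b: "log_concave b" and \<sigma>: "\<sigma> permutes {1..m + n}"
    and upper: "\<forall>r\<in>{1..n}. r \<le> \<sigma> r \<and> \<sigma> r \<le> r + m"
    and lower: "\<forall>i\<in>{1..m}. i \<le> \<sigma> (n + i) \<and> \<sigma> (n + i) \<le> i + n"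
  shows "(\<Prod>i\<in>{1..m + n}. sylvester m n a b i (\<sigma> i)) \<preceq> merge_sum m n a b"
proof -
  have inj: "inj \<sigma>"
    using \<sigma> by (rule permutes_inj)
  have "inj_on \<sigma> {1..n}" and "\<forall>r\<in>{1..n}. r \<le> \<sigma> r"
    using inj upper by (auto intro: inj_on_subset)
  from log_concave_prod_sort[OF a this] obtain p where p: "strict_mono_on {1..n} p" "p ` {1..n} = \<sigma> ` {1..n}"
      "(\<Prod>r\<in>{1..n}. a (\<sigma> r - r)) \<preceq> (\<Prod>r\<in>{1..n}. a (p r - r))"
    by blast
  have "inj_on (\<lambda>i. \<sigma> (n + i)) {1..m}"
    by (intro inj_onI) (simp add: inj_eq[OF inj])
  moreover have "\<forall>i\<in>{1..m}. i \<le> \<sigma> (n + i)"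
    using lower by simp
  ultimately obtain q where q: "strict_mono_on {1..m} q" "q ` {1..m} = (\<lambda>i. \<sigma> (n + i)) ` {1..m}"
      "(\<Prod>i\<in>{1..m}. b (\<sigma> (n + i) - i)) \<preceq> (\<Prod>i\<in>{1..m}. b (q i - i))"
    using log_concave_prod_sort[OF b] by meson
  have "(\<Prod>r\<in>{1..n}. sylvester m n a b r (\<sigma> r)) = (\<Prod>r\<in>{1..n}. a (\<sigma> r - r))"
    using upper by (intro prod.cong) (simp_all add: sylvester_upper)
  moreover have "(\<Prod>i\<in>{1..m}. sylvester m n a b (n + i) (\<sigma> (n + i))) = (\<Prod>i\<in>{1..m}. b (\<sigma> (n + i) - i))"
    using lower by (intro prod.cong) (simp_all add: sylvester_lower)
  ultimately have "(\<Prod>i\<in>{1..m + n}. sylvester m n a b i (\<sigma> i))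
      = (\<Prod>r\<in>{1..n}. a (\<sigma> r - r)) * (\<Prod>i\<in>{1..m}. b (\<sigma> (n + i) - i))"
    unfolding prod_atLeastAtMost_add_split[of _ m n] by simp
  also have "\<dots> \<preceq> (\<Prod>r\<in>{1..n}. a (p r - r)) * (\<Prod>i\<in>{1..m}. b (q i - i))"
    using p(3) q(3) by (rule mult_idem_mono)
  also have "\<dots> \<preceq> merge_sum m n a b"
    using p(1) q(1) permutes_block_images[OF \<sigma>, folded p(2) q(2)]
    by (rule prod_partition_le_merge_sum)
  finally show ?thesis .
qed

lemma per_le_merge_sum:
  assumes "log_concave a" "log_concave b"
  shows "per (m + n) (sylvester m n a b) \<preceq> merge_sum m n a b"
  unfolding per_def
proof (rule sum_idem_le)
  fix \<sigma> assume "\<sigma> \<in> {\<sigma>. \<sigma> permutes {1..m + n}}"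
  then have \<sigma>: "\<sigma> permutes {1..m + n}" by simp
  show "(\<Prod>i\<in>{1..m + n}. sylvester m n a b i (\<sigma> i)) \<preceq> merge_sum m n a b"
  proof (cases "(\<forall>r\<in>{1..n}. r \<le> \<sigma> r \<and> \<sigma> r \<le> r + m) \<and> (\<forall>i\<in>{1..m}. i \<le> \<sigma> (n + i) \<and> \<sigma> (n + i) \<le> i + n)")
    case True
    then show ?thesis
      using sylvester_perm_prod_le_merge_sum[OF assms \<sigma>] by blast
  next
    case False
    then have "(\<Prod>r\<in>{1..n}. sylvester m n a b r (\<sigma> r)) = 0
        \<or> (\<Prod>i\<in>{1..m}. sylvester m n a b (n + i) (\<sigma> (n + i))) = 0"
      by (auto intro: prod_eq_zeroI simp: sylvester_upper sylvester_lower)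
    then show ?thesis
      unfolding prod_atLeastAtMost_add_split[of _ m n] by auto
  qed
qed

lemma prod_atLeastAtMost_if_less:
  fixes x :: "'a::comm_monoid_mult"
  assumes "l \<le> n"
  shows "(\<Prod>r\<in>{1..n}. if l < r then x else 1) = x ^ (n - l)"
proof -
  have "(\<Prod>r\<in>{1..n}. if l < r then x else 1) = (\<Prod>r\<in>{1..n} \<inter> {r. l < r}. x)"
    by (simp add: prod.If_cases)
  also have "{1..n} \<inter> {r. l < r} = {Suc l..n}"
    by auto
  finally show ?thesis
    using assms by simp
qed

lemma prod_atLeastAtMost_split:
  fixes f :: "nat \<Rightarrow> 'a::comm_monoid_mult"
  assumes "j \<le> M"
  shows "(\<Prod>i\<in>{1..M}. f i) = (\<Prod>i\<in>{1..j}. f i) * (\<Prod>i\<in>{Suc j..M}. f i)"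
proof -
  have "{1..M} = {1..j} \<union> {Suc j..M}"
    using assms by auto
  then show ?thesis
    by (simp add: prod.union_disjoint ivl_disj_int)
qed

lemma prod_atLeastAtMost_Suc_split:
  fixes f :: "nat \<Rightarrow> 'a::comm_monoid_mult"
  assumes "j \<le> M"
  shows "(\<Prod>i\<in>{1..Suc M}. f i) = (\<Prod>i\<in>{1..j}. f i) * f (Suc j) * (\<Prod>i\<in>{Suc j..M}. f (Suc i))"
proof -
  have "(\<Prod>i\<in>{1..Suc M}. f i) = (\<Prod>i\<in>{1..j}. f i) * (\<Prod>i\<in>{Suc j..Suc M}. f i)"
    using assms by (intro prod_atLeastAtMost_split) simp
  also have "(\<Prod>i\<in>{Suc j..Suc M}. f i) = f (Suc j) * (\<Prod>i\<in>{Suc (Suc j)..Suc M}. f i)"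
    using assms by (intro prod.atLeast_Suc_atMost) simp
  also have "(\<Prod>i\<in>{Suc (Suc j)..Suc M}. f i) = (\<Prod>i\<in>{Suc j..M}. f (Suc i))"
    by (rule prod.shift_bounds_cl_Suc_ivl)
  finally show ?thesis
    by (simp add: mult.assoc)
qed

context
  fixes k k' :: "nat \<Rightarrow> nat" and l m n :: nat
  assumes k': "k' \<in> mono_merge_patterns m n" and l: "l \<le> n"
    and k: "\<And>r. r \<in> {1..n} \<Longrightarrow> k r = k' r + (if l < r then 1 else 0)"
begin

lemma count_less_bump:
  defines "\<kappa> \<equiv> if l = 0 then 0 else k' l"
  shows "\<kappa> \<le> m"
    and "i \<le> \<kappa> \<Longrightarrow> count_less n k i = count_less n k' i"
    and "count_less n k (Suc \<kappa>) = l"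
    and "Suc \<kappa> \<le> i \<Longrightarrow> count_less n k (Suc i) = count_less n k' i"
proof -
  have k'_le: "\<And>r. r \<in> {1..n} \<Longrightarrow> k' r \<le> m" and k'_mono: "mono_on {1..n} k'"
    using k' merge_patterns_le by (auto simp: mono_merge_patterns_def)
  have before: "k' r \<le> \<kappa>" if "r \<in> {1..n}" "r \<le> l" for r
    using that l monotone_onD[OF k'_mono, of r l] by (auto simp: \<kappa>_def)
  have after: "\<kappa> \<le> k' r" if "r \<in> {1..n}" "l < r" for r
    using that l monotone_onD[OF k'_mono, of l r] by (auto simp: \<kappa>_def)
  show "\<kappa> \<le> m"
    using l k'_le by (auto simp: \<kappa>_def)
  show "count_less n k i = count_less n k' i" if "i \<le> \<kappa>"
  proof -
    have "k r < i \<longleftrightarrow> k' r < i" if "r \<in> {1..n}" for r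
      using after[OF that] k[OF that] \<open>i \<le> \<kappa>\<close> by (cases "l < r") auto
    then show ?thesis
      unfolding count_less_def by (metis (lifting))
  qed
  have "k r < Suc \<kappa> \<longleftrightarrow> r \<le> l" if "r \<in> {1..n}" for r
    using before[OF that] after[OF that] k[OF that] by (cases "l < r") auto
  then have "{r \<in> {1..n}. k r < Suc \<kappa>} = {1..l}"
    using l by auto
  then show "count_less n k (Suc \<kappa>) = l"
    by (simp add: count_less_def)
  show "count_less n k (Suc i) = count_less n k' i" if "Suc \<kappa> \<le> i"
  proof -
    have "k r < Suc i \<longleftrightarrow> k' r < i" if "r \<in> {1..n}" for r
      using before[OF that] k[OF that] \<open>Suc \<kappa> \<le> i\<close> by (cases "l < r") auto
    then show ?thesis
      unfolding count_less_def by (metis (lifting))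
  qed
qed

lemma prod_count_less_bump:
  "(\<Prod>i\<in>{1..Suc m}. f (count_less n k i)) = f l * (\<Prod>i\<in>{1..m}. f (count_less n k' i))"
proof -
  define \<kappa> where "\<kappa> = (if l = 0 then 0 else k' l)"
  note bump = count_less_bump[folded \<kappa>_def]
  have "(\<Prod>i\<in>{1..Suc m}. f (count_less n k i))
      = (\<Prod>i\<in>{1..\<kappa>}. f (count_less n k i)) * f l * (\<Prod>i\<in>{Suc \<kappa>..m}. f (count_less n k (Suc i)))"
    by (simp only: prod_atLeastAtMost_Suc_split[OF bump(1)] bump(3))
  also have "\<dots> = (\<Prod>i\<in>{1..\<kappa>}. f (count_less n k' i)) * f l * (\<Prod>i\<in>{Suc \<kappa>..m}. f (count_less n k' i))"
    using bump(2,4) by (intro arg_cong2[where f = "(*)"] arg_cong[where f = "\<lambda>x. x * f l"] prod.cong) simp_all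
  also have "\<dots> = f l * (\<Prod>i\<in>{1..m}. f (count_less n k' i))"
    unfolding prod_atLeastAtMost_split[OF bump(1), of "\<lambda>i. f (count_less n k' i)"] by (simp add: mult_ac)
  finally show ?thesis .
qed

end

lemma mono_merge_sum_Suc_ge:
  fixes \<alpha> b :: "nat \<Rightarrow> 'a::comm_idem_semiring"
  shows "mono_merge_sum m n (elem_sym m \<alpha>) b * (\<Sum>l\<in>{0..n}. \<alpha> (Suc m) ^ (n - l) * b l)
    \<preceq> mono_merge_sum (Suc m) n (elem_sym (Suc m) \<alpha>) b"
  unfolding mono_merge_sum_def sum_product
proof (intro sum_idem_le)
  fix k' l assume k': "k' \<in> mono_merge_patterns m n" and "l \<in> {0..n}"
  then have l: "l \<le> n" by simp
  let ?a' = "elem_sym m \<alpha>" and ?a = "elem_sym (Suc m) \<alpha>" and ?x = "\<alpha> (Suc m)"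
  define k where "k = restrict (\<lambda>r. k' r + (if l < r then 1 else 0)) {1..n}"
  have kr: "\<And>r. r \<in> {1..n} \<Longrightarrow> k r = k' r + (if l < r then 1 else 0)"
    by (simp add: k_def)
  have k'_le: "\<And>r. r \<in> {1..n} \<Longrightarrow> k' r \<le> m" and k'_mono: "mono_on {1..n} k'"
    using k' merge_patterns_le by (auto simp: mono_merge_patterns_def)
  have "mono_on {1..n} k"
  proof (rule monotone_onI)
    fix r s assume "r \<in> {1..n}" "s \<in> {1..n}" "r \<le> s"
    then show "k r \<le> k s"
      using monotone_onD[OF k'_mono, of r s] by (auto simp: kr)
  qed
  moreover have "k \<in> merge_patterns (Suc m) n"
  proof -
    have "k r \<in> {0..Suc m}" if "r \<in> {1..n}" for r
      using k'_le[OF that] by (simp add: kr[OF that])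
    then show ?thesis
      by (simp add: merge_patterns_def k_def PiE_iff)
  qed
  ultimately have k: "k \<in> mono_merge_patterns (Suc m) n"
    by (simp add: mono_merge_patterns_def)
  have "?x ^ (n - l) * (\<Prod>r\<in>{1..n}. ?a' (k' r)) = (\<Prod>r\<in>{1..n}. (if l < r then ?x else 1) * ?a' (k' r))"
    using prod_atLeastAtMost_if_less[OF l, of ?x] by (simp add: prod.distrib)
  also have "\<dots> \<preceq> (\<Prod>r\<in>{1..n}. ?a (k r))"
    by (rule prod_idem_mono) (simp add: kr elem_sym_le_Suc mult_elem_sym_le_Suc)
  finally have a_part: "?x ^ (n - l) * (\<Prod>r\<in>{1..n}. ?a' (k' r)) \<preceq> (\<Prod>r\<in>{1..n}. ?a (k r))" .
  have "(\<Prod>i\<in>{1..Suc m}. b (count_less n k i)) = b l * (\<Prod>i\<in>{1..m}. b (count_less n k' i))"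
    by (rule prod_count_less_bump[OF k' l kr])
  then have "merge_term m n ?a' b k' * (?x ^ (n - l) * b l)
      = (?x ^ (n - l) * (\<Prod>r\<in>{1..n}. ?a' (k' r))) * (\<Prod>i\<in>{1..Suc m}. b (count_less n k i))"
    unfolding merge_term_def by (simp only: mult_ac)
  also have "\<dots> \<preceq> merge_term (Suc m) n ?a b k"
    unfolding merge_term_def using a_part by (rule mult_right_idem_mono)
  also have "\<dots> \<preceq> (\<Sum>k\<in>mono_merge_patterns (Suc m) n. merge_term (Suc m) n ?a b k)"
    using k by (rule member_idem_le_sum[OF finite_mono_merge_patterns])
  finally show "merge_term m n ?a' b k' * (?x ^ (n - l) * b l)
      \<preceq> (\<Sum>k\<in>mono_merge_patterns (Suc m) n. merge_term (Suc m) n ?a b k)" .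
qed

lemma prod_add_le_mono_merge_sum:
  "(\<Prod>i\<in>{1..m}. \<Prod>j\<in>{1..n}. \<alpha> i + \<beta> j) \<preceq> mono_merge_sum m n (elem_sym m \<alpha>) (elem_sym n \<beta>)"
proof (induction m)
  case 0
  define k0 where "k0 = restrict (\<lambda>_. 0::nat) {1..n}"
  have "k0 \<in> mono_merge_patterns 0 n"
    by (auto simp: k0_def mono_merge_patterns_def merge_patterns_def monotone_on_def)
  then have "merge_term 0 n (elem_sym 0 \<alpha>) (elem_sym n \<beta>) k0 \<preceq> mono_merge_sum 0 n (elem_sym 0 \<alpha>) (elem_sym n \<beta>)"
    unfolding mono_merge_sum_def by (rule member_idem_le_sum[OF finite_mono_merge_patterns])
  moreover have "merge_term 0 n (elem_sym 0 \<alpha>) (elem_sym n \<beta>) k0 = 1"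
    by (simp add: merge_term_def k0_def)
  moreover have "(\<Prod>i\<in>{1..0::nat}. \<Prod>j\<in>{1..n}. \<alpha> i + \<beta> j) = 1"
    by simp
  ultimately show ?case
    by (simp only:)
next
  case (Suc m)
  let ?g = "\<Sum>l\<in>{0..n}. \<alpha> (Suc m) ^ (n - l) * elem_sym n \<beta> l"
  have "(\<Prod>j\<in>{1..n}. \<alpha> (Suc m) + \<beta> j) = ?g"
    by (rule prod_add_eq_elem_sym)
  then have split: "(\<Prod>i\<in>{1..Suc m}. \<Prod>j\<in>{1..n}. \<alpha> i + \<beta> j) = (\<Prod>i\<in>{1..m}. \<Prod>j\<in>{1..n}. \<alpha> i + \<beta> j) * ?g"
    by (simp only: prod.cl_ivl_Suc) simp
  show ?case
    unfolding split using mult_right_idem_mono[OF Suc.IH] mono_merge_sum_Suc_ge by (rule idem_le_trans)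
qed

lemma exists_top_subset:
  fixes k :: "'b \<Rightarrow> nat"
  assumes "finite A" "w \<le> card A"
  shows "\<exists>T\<subseteq>A. card T = w \<and> (\<forall>r\<in>T. \<forall>r'\<in>A - T. k r' \<le> k r)"
  using assms(2)
proof (induction w)
  case 0
  then show ?case by auto
next
  case (Suc w)
  then obtain T where T: "T \<subseteq> A" "card T = w" "\<forall>r\<in>T. \<forall>r'\<in>A - T. k r' \<le> k r"
    by auto
  have "finite T"
    using T(1) assms(1) finite_subset by blast
  have "A - T \<noteq> {}"
    using card_mono[OF \<open>finite T\<close>, of A] Suc.prems T(2) by auto
  then obtain r0 where r0: "r0 \<in> A - T" "k r0 = Max (k ` (A - T))"
    using Max_in[of "k ` (A - T)"] assms(1) by (metis (mono_tags) empty_is_image finite_Diff finite_imageI imageE)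
  have r0_max: "\<forall>r'\<in>A - T. k r' \<le> k r0"
    using r0(2) assms(1) by simp
  have "insert r0 T \<subseteq> A" "card (insert r0 T) = Suc w"
    using T r0(1) \<open>finite T\<close> by auto
  moreover have "\<forall>r\<in>insert r0 T. \<forall>r'\<in>A - insert r0 T. k r' \<le> k r"
    using T(3) r0_max by auto
  ultimately show ?case by blast
qed

lemma prod_exchange_step:
  fixes f g :: "'b \<Rightarrow> 'a::comm_idem_semiring"
  assumes "finite A" "W \<subseteq> A" "r \<in> W" "r' \<in> A - W"
    and "f r * g r' \<preceq> g r * f r'"
  shows "(\<Prod>s\<in>W. f s) * (\<Prod>s\<in>A - W. g s)
    \<preceq> (\<Prod>s\<in>insert r' (W - {r}). f s) * (\<Prod>s\<in>A - insert r' (W - {r}). g s)"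
proof -
  have fin: "finite W" "finite (A - W)"
    using assms(1,2) finite_subset by auto
  define X where "X = (\<Prod>s\<in>W - {r}. f s)"
  define Y where "Y = (\<Prod>s\<in>A - W - {r'}. g s)"
  have "A - insert r' (W - {r}) = insert r (A - W - {r'})"
    using assms(2-4) by auto
  then have "(\<Prod>s\<in>insert r' (W - {r}). f s) * (\<Prod>s\<in>A - insert r' (W - {r}). g s) = (f r' * X) * (g r * Y)"
    using assms(1,3,4) fin by (simp add: X_def Y_def)
  moreover have "(\<Prod>s\<in>W. f s) * (\<Prod>s\<in>A - W. g s) = (f r * X) * (g r' * Y)"
    using assms(3,4) fin by (simp add: X_def Y_def prod.remove)
  moreover have "(f r * X) * (g r' * Y) \<preceq> (f r' * X) * (g r * Y)"
    using mult_right_idem_mono[OF assms(5), of "X * Y"] by (simp add: mult_ac)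
  ultimately show ?thesis by simp
qed

lemma prod_exchange_le:
  fixes k :: "'b \<Rightarrow> nat" and f g :: "'b \<Rightarrow> 'a::comm_idem_semiring"
  assumes A: "finite A" and T: "T \<subseteq> A" and top: "\<forall>r\<in>T. \<forall>r'\<in>A - T. k r' \<le> k r"
    and exch: "\<And>r r'. r \<in> A \<Longrightarrow> r' \<in> A \<Longrightarrow> k r \<le> k r' \<Longrightarrow> f r * g r' \<preceq> g r * f r'"
  shows "W \<subseteq> A \<Longrightarrow> card W = card T \<Longrightarrow>
    (\<Prod>r\<in>W. f r) * (\<Prod>r\<in>A - W. g r) \<preceq> (\<Prod>r\<in>T. f r) * (\<Prod>r\<in>A - T. g r)"
proof (induction "card (W - T)" arbitrary: W rule: less_induct)
  case less
  have fin: "finite W" "finite T"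
    using less.prems(1) T A finite_subset by auto
  show ?case
  proof (cases "W \<subseteq> T")
    case True
    then have "W = T"
      using card_subset_eq[OF fin(2)] less.prems(2) by auto
    then show ?thesis by simp
  next
    case False
    then obtain r where r: "r \<in> W" "r \<notin> T" by auto
    have "card (W - T) = card (T - W)"
      using card_Diff_subset_Int[of W T] card_Diff_subset_Int[of T W] fin less.prems(2)
      by (simp add: Int_commute)
    moreover have "card (W - T) > 0"
      using r fin by (auto simp: card_gt_0_iff)
    ultimately have "card (T - W) > 0"
      by simp
    then have "T - W \<noteq> {}"
      by (simp add: card_gt_0_iff)
    then obtain r' where r': "r' \<in> T" "r' \<notin> W" by auto
    define W' where "W' = insert r' (W - {r})"
    have "0 < card W"
      using r fin(1) card_gt_0_iff by blast
    then have "card W' = card T"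
      using less.prems(2) r r' fin by (simp add: W'_def card_Diff_singleton)
    moreover have "W' \<subseteq> A"
      using less.prems(1) r' T by (auto simp: W'_def)
    moreover have "card (W' - T) < card (W - T)"
    proof -
      have "W' - T = (W - T) - {r}"
        using r' by (auto simp: W'_def)
      then show ?thesis
        using fin r by (metis DiffI card_Diff1_less finite_Diff)
    qed
    ultimately have "(\<Prod>r\<in>W'. f r) * (\<Prod>r\<in>A - W'. g r) \<preceq> (\<Prod>r\<in>T. f r) * (\<Prod>r\<in>A - T. g r)"
      using less.hyps by blast
    moreover have "(\<Prod>r\<in>W. f r) * (\<Prod>r\<in>A - W. g r) \<preceq> (\<Prod>r\<in>W'. f r) * (\<Prod>r\<in>A - W'. g r)"
      unfolding W'_def using A less.prems(1) r r' T top
      by (intro prod_exchange_step exch) auto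
    ultimately show ?thesis
      using idem_le_trans by blast
  qed
qed

lemma prod_shifted_counts_eq:
  fixes u v :: "nat \<Rightarrow> nat" and b :: "nat \<Rightarrow> 'a::comm_monoid_mult"
  assumes "\<forall>i\<le>Suc m. v i = 0" "u (Suc m) = c"
  shows "(\<Prod>i\<in>{1..Suc m}. b (u i + v i)) = b c * (\<Prod>i\<in>{1..m}. b (u i + v (Suc i)))"
proof -
  have "(\<Prod>i\<in>{1..m}. b (u i + v i)) = (\<Prod>i\<in>{1..m}. b (u i + v (Suc i)))"
    using assms(1) by (intro prod.cong) simp_all
  then show ?thesis
    using assms by (simp add: prod.cl_ivl_Suc mult.commute)
qed

lemma log_concave_prod_shifted_counts:
  fixes u v :: "nat \<Rightarrow> nat"
  assumes b: "log_concave b" and "j < m" and u_le: "\<forall>i. u i \<le> c"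
    and v_0: "\<forall>i\<le>Suc j. v i = 0" and u_c: "\<forall>i>Suc j. u i = c"
  shows "(\<Prod>i\<in>{1..Suc m}. b (u i + v i)) \<preceq> b c * (\<Prod>i\<in>{1..m}. b (u i + v (Suc i)))"
proof -
  define V where "V = v (Suc (Suc j))"
  define P1 where "P1 = (\<Prod>i\<in>{1..j}. b (u i))"
  define P3 where "P3 = (\<Prod>i\<in>{Suc (Suc j)..m}. b (c + v (Suc i)))"
  have head: "(\<Prod>i\<in>{1..j}. b (u i + v i)) = P1" "(\<Prod>i\<in>{1..j}. b (u i + v (Suc i))) = P1"
    unfolding P1_def using v_0 by (auto intro: prod.cong)
  have tail: "(\<Prod>i\<in>{Suc (Suc j)..m}. b (u (Suc i) + v (Suc i))) = P3"
    "(\<Prod>i\<in>{Suc (Suc j)..m}. b (u i + v (Suc i))) = P3"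
    unfolding P3_def using u_c by (auto intro: prod.cong)
  have "(\<Prod>i\<in>{1..Suc m}. b (u i + v i))
      = (\<Prod>i\<in>{1..j}. b (u i + v i)) * b (u (Suc j) + v (Suc j))
        * (\<Prod>i\<in>{Suc j..m}. b (u (Suc i) + v (Suc i)))"
    using \<open>j < m\<close> by (intro prod_atLeastAtMost_Suc_split) simp
  also have "\<dots> = P1 * b (u (Suc j)) * (b (c + V) * P3)"
    using \<open>j < m\<close> u_c v_0 by (simp add: head tail(1)[symmetric] V_def P1_def prod.atLeast_Suc_atMost)
  finally have lhs: "(\<Prod>i\<in>{1..Suc m}. b (u i + v i)) = P1 * b (u (Suc j)) * (b (c + V) * P3)" .
  have "(\<Prod>i\<in>{1..m}. b (u i + v (Suc i)))
      = (\<Prod>i\<in>{1..j}. b (u i + v (Suc i))) * (\<Prod>i\<in>{Suc j..m}. b (u i + v (Suc i)))"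
    using \<open>j < m\<close> by (intro prod_atLeastAtMost_split) simp
  also have "\<dots> = P1 * (b (u (Suc j) + V) * P3)"
    using \<open>j < m\<close> by (simp only: head(2) tail(2) V_def prod.atLeast_Suc_atMost[of "Suc j" m] Suc_le_eq)
  finally have rhs: "(\<Prod>i\<in>{1..m}. b (u i + v (Suc i))) = P1 * (b (u (Suc j) + V) * P3)" .
  have "b (c + V) * b (u (Suc j)) \<preceq> b (c + V - V) * b (u (Suc j) + V)"
    using u_le[rule_format, of "Suc j"] by (intro log_concave_spread[OF b]) linarith
  then have "b (u (Suc j)) * b (c + V) \<preceq> b (u (Suc j) + V) * b c"
    by (simp add: mult.commute)
  then have "b (u (Suc j)) * b (c + V) * (P1 * P3) \<preceq> b (u (Suc j) + V) * b c * (P1 * P3)"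
    by (rule mult_right_idem_mono)
  then show ?thesis
    unfolding lhs rhs by (simp only: mult_ac)
qed

lemma count_less_decrement:
  fixes k k' :: "nat \<Rightarrow> nat"
  assumes T: "T \<subseteq> {1..n}" and pos: "\<forall>r\<in>T. 1 \<le> k r"
    and k': "\<forall>r\<in>{1..n}. k' r = (if r \<in> T then k r - 1 else k r)"
  shows "count_less n k i = card {r \<in> {1..n} - T. k r < i} + card {r \<in> T. k r < i}"
    and "count_less n k' i = card {r \<in> {1..n} - T. k r < i} + card {r \<in> T. k r < Suc i}"
proof -
  have fin: "finite T" "finite ({1..n} - T)"
    using T finite_subset by auto
  have "{r \<in> {1..n}. k r < i} = {r \<in> {1..n} - T. k r < i} \<union> {r \<in> T. k r < i}"
    using T by auto
  then show "count_less n k i = card {r \<in> {1..n} - T. k r < i} + card {r \<in> T. k r < i}"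
    unfolding count_less_def using fin by (simp add: card_Un_disjoint disjoint_iff)
  have k'_less: "k' r < i \<longleftrightarrow> (if r \<in> T then k r < Suc i else k r < i)" if "r \<in> {1..n}" for r
    using k' pos that by (cases "r \<in> T") auto
  have "{r \<in> {1..n}. k' r < i} = {r \<in> {1..n} - T. k r < i} \<union> {r \<in> T. k r < Suc i}"
    using T by (auto simp: k'_less split: if_splits)
  then show "count_less n k' i = card {r \<in> {1..n} - T. k r < i} + card {r \<in> T. k r < Suc i}"
    unfolding count_less_def using fin by (simp add: card_Un_disjoint disjoint_iff)
qed

lemma prod_count_less_top_le:
  fixes k k' :: "nat \<Rightarrow> nat" and b :: "nat \<Rightarrow> 'a::comm_idem_semiring"
  assumes b: "log_concave b" and T: "T \<subseteq> {1..n}"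
    and top: "\<forall>r\<in>T. \<forall>r'\<in>{1..n} - T. k r' \<le> k r"
    and pos: "\<forall>r\<in>T. 1 \<le> k r" and out: "\<forall>r\<in>{1..n} - T. k r \<le> m"
    and k': "\<forall>r\<in>{1..n}. k' r = (if r \<in> T then k r - 1 else k r)"
  shows "(\<Prod>i\<in>{1..Suc m}. b (count_less n k i)) \<preceq> b (n - card T) * (\<Prod>i\<in>{1..m}. b (count_less n k' i))"
proof -
  define u where "u i = card {r \<in> {1..n} - T. k r < i}" for i
  define v where "v i = card {r \<in> T. k r < i}" for i
  define c where "c = n - card T"
  have fin: "finite T" "finite ({1..n} - T)"
    using T finite_subset by auto
  have count_k: "count_less n k i = u i + v i" and count_k': "count_less n k' i = u i + v (Suc i)" for i
    using count_less_decrement[OF T pos k'] by (simp_all add: u_def v_def)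
  have "card ({1..n} - T) = c"
    using T fin by (simp add: c_def card_Diff_subset)
  moreover have "u i \<le> card ({1..n} - T)" for i
    unfolding u_def by (rule card_mono[OF fin(2)]) auto
  ultimately have u_le: "\<forall>i. u i \<le> c"
    by simp
  have u_c: "u i = c" if "\<forall>r\<in>{1..n} - T. k r < i" for i
  proof -
    have "{r \<in> {1..n} - T. k r < i} = {1..n} - T"
      using that by blast
    with \<open>card ({1..n} - T) = c\<close> show ?thesis
      by (simp add: u_def)
  qed
  have v_0: "v i = 0" if "\<forall>r\<in>T. i \<le> k r" for i
  proof -
    have "{r \<in> T. k r < i} = {}"
      using that by (auto simp: not_less[symmetric])
    then show ?thesis
      unfolding v_def by (simp only: card.empty)
  qed
  show ?thesis
  proof (cases "\<forall>r\<in>T. m < k r")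
    case True
    then have "\<forall>i\<le>Suc m. v i = 0"
      using v_0 by (meson Suc_leI order_trans)
    moreover have "u (Suc m) = c"
      using u_c out by (simp add: less_Suc_eq_le)
    ultimately show ?thesis
      unfolding count_k count_k' c_def[symmetric] by (simp only: prod_shifted_counts_eq idem_le_refl)
  next
    case False
    define \<theta> where "\<theta> = Min (k ` T)"
    have "T \<noteq> {}"
      using False by auto
    then have \<theta>_min: "\<forall>r\<in>T. \<theta> \<le> k r" and "\<theta> \<in> k ` T"
      using fin(1) by (simp_all add: \<theta>_def)
    then obtain r0 where r0: "r0 \<in> T" "k r0 = \<theta>"
      by blast
    have "1 \<le> \<theta>" "\<theta> \<le> m"
      using r0 pos False \<theta>_min by (auto simp: not_less intro: order_trans)
    have "\<forall>i\<le>Suc (\<theta> - 1). v i = 0"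
      using v_0 \<theta>_min \<open>1 \<le> \<theta>\<close> by (auto intro: order_trans)
    moreover have "\<forall>i>Suc (\<theta> - 1). u i = c"
      using u_c top r0 \<open>1 \<le> \<theta>\<close> by (auto intro: le_less_trans)
    moreover have "\<theta> - 1 < m"
      using \<open>1 \<le> \<theta>\<close> \<open>\<theta> \<le> m\<close> by simp
    ultimately show ?thesis
      unfolding count_k count_k' c_def[symmetric] using log_concave_prod_shifted_counts[OF b _ u_le] by blast
  qed
qed

lemma prod_top_decrement_eq:
  fixes k k' :: "nat \<Rightarrow> nat" and e :: "nat \<Rightarrow> 'a::comm_monoid_mult"
  assumes T: "T \<subseteq> {1..n}" and pos: "\<forall>r\<in>T. 1 \<le> k r"
    and k': "\<forall>r\<in>{1..n}. k' r = (if r \<in> T then k r - 1 else k r)"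
  shows "(\<Prod>r\<in>T. x * e (k r - 1)) * (\<Prod>r\<in>{1..n} - T. e (k r)) = x ^ card T * (\<Prod>r\<in>{1..n}. e (k' r))"
proof -
  have "(\<Prod>r\<in>T. x * e (k r - 1)) = x ^ card T * (\<Prod>r\<in>T. e (k' r))"
    using T k' by (simp add: prod.distrib subset_iff cong: prod.cong)
  moreover have "(\<Prod>r\<in>{1..n} - T. e (k r)) = (\<Prod>r\<in>{1..n} - T. e (k' r))"
    using k' by (intro prod.cong) simp_all
  ultimately show ?thesis
    using prod.subset_diff[OF T finite_atLeastAtMost, of "\<lambda>r. e (k' r)"] by (simp add: mult_ac)
qed

lemma merge_term_Suc_top_le:
  fixes \<alpha> b :: "nat \<Rightarrow> 'a::comm_idem_semiring"
  assumes b: "log_concave b" and k: "k \<in> merge_patterns (Suc m) n"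
    and T: "T \<subseteq> {1..n}" and top: "\<forall>r\<in>T. \<forall>r'\<in>{1..n} - T. k r' \<le> k r"
  defines "h0 \<equiv> \<lambda>r. elem_sym m \<alpha> (k r)"
    and "h1 \<equiv> \<lambda>r. if k r = 0 then 0 else \<alpha> (Suc m) * elem_sym m \<alpha> (k r - 1)"
  shows "(\<Prod>r\<in>T. h1 r) * (\<Prod>r\<in>{1..n} - T. h0 r) * (\<Prod>i\<in>{1..Suc m}. b (count_less n k i))
    \<preceq> merge_sum m n (elem_sym m \<alpha>) b * (\<Sum>l\<in>{0..n}. \<alpha> (Suc m) ^ (n - l) * b l)"
    (is "?P * ?B \<preceq> ?R")
proof (cases "(\<exists>r\<in>T. k r = 0) \<or> (\<exists>r\<in>{1..n} - T. k r = Suc m)")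
  case True
  have "finite T"
    using T finite_subset by blast
  from True consider r where "r \<in> T" "k r = 0" | r where "r \<in> {1..n} - T" "k r = Suc m"
    by blast
  then have "?P = 0"
  proof cases
    case 1
    then have "(\<Prod>r\<in>T. h1 r) = 0"
      using \<open>finite T\<close> by (intro prod_eq_zeroI[of T r]) (simp_all add: h1_def)
    then show ?thesis by simp
  next
    case 2
    then have "(\<Prod>r\<in>{1..n} - T. h0 r) = 0"
      by (intro prod_eq_zeroI[of _ r]) (simp_all add: h0_def elem_sym_eq_0)
    then show ?thesis by simp
  qed
  then show ?thesis by simp
next
  case False
  then have pos: "\<forall>r\<in>T. 1 \<le> k r"
    by auto
  have out: "\<forall>r\<in>{1..n} - T. k r \<le> m"
  proof
    fix r assume r: "r \<in> {1..n} - T"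
    then have "k r \<le> Suc m" "k r \<noteq> Suc m"
      using False merge_patterns_le[OF k] by auto
    then show "k r \<le> m" by simp
  qed
  define k' where "k' = restrict (\<lambda>r. if r \<in> T then k r - 1 else k r) {1..n}"
  have k'_eq: "\<forall>r\<in>{1..n}. k' r = (if r \<in> T then k r - 1 else k r)"
    by (simp add: k'_def)
  have "k' r \<in> {0..m}" if "r \<in> {1..n}" for r
    using that out merge_patterns_le[OF k that] by (auto simp: k'_def)
  then have k': "k' \<in> merge_patterns m n"
    by (simp add: merge_patterns_def k'_def PiE_iff)
  have "card T \<le> n"
    using card_mono[OF _ T] by simp
  have "(\<Prod>r\<in>T. h1 r) = (\<Prod>r\<in>T. \<alpha> (Suc m) * elem_sym m \<alpha> (k r - 1))"
    using pos by (intro prod.cong) (auto simp: h1_def)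
  then have "?P = (\<Prod>r\<in>T. \<alpha> (Suc m) * elem_sym m \<alpha> (k r - 1)) * (\<Prod>r\<in>{1..n} - T. elem_sym m \<alpha> (k r))"
    by (simp add: h0_def)
  also have "\<dots> = \<alpha> (Suc m) ^ card T * (\<Prod>r\<in>{1..n}. elem_sym m \<alpha> (k' r))"
    by (rule prod_top_decrement_eq[OF T pos k'_eq])
  finally have "?P * ?B \<preceq> \<alpha> (Suc m) ^ card T * (\<Prod>r\<in>{1..n}. elem_sym m \<alpha> (k' r))
      * (b (n - card T) * (\<Prod>i\<in>{1..m}. b (count_less n k' i)))"
    using prod_count_less_top_le[OF b T top pos out k'_eq] by (simp only: mult_idem_mono[OF idem_le_refl])
  also have "\<dots> = merge_term m n (elem_sym m \<alpha>) b k' * (\<alpha> (Suc m) ^ (n - (n - card T)) * b (n - card T))"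
    using \<open>card T \<le> n\<close> unfolding merge_term_def by (simp only: diff_diff_cancel mult_ac)
  also have "\<dots> \<preceq> ?R"
    unfolding merge_sum_def sum_product
    by (intro idem_le_sumI[OF finite_merge_patterns k'] member_idem_le_sum) simp_all
  finally show ?thesis .
qed

lemma merge_sum_Suc_le:
  fixes \<alpha> b :: "nat \<Rightarrow> 'a::comm_idem_semiring"
  assumes b: "log_concave b"
  shows "merge_sum (Suc m) n (elem_sym (Suc m) \<alpha>) b
    \<preceq> merge_sum m n (elem_sym m \<alpha>) b * (\<Sum>l\<in>{0..n}. \<alpha> (Suc m) ^ (n - l) * b l)"
  unfolding merge_sum_def[of "Suc m"]
proof (rule sum_idem_le)
  fix k assume k: "k \<in> merge_patterns (Suc m) n"
  let ?R = "merge_sum m n (elem_sym m \<alpha>) b * (\<Sum>l\<in>{0..n}. \<alpha> (Suc m) ^ (n - l) * b l)"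
  define h0 where "h0 = (\<lambda>r. elem_sym m \<alpha> (k r))"
  define h1 where "h1 = (\<lambda>r. if k r = 0 then 0 else \<alpha> (Suc m) * elem_sym m \<alpha> (k r - 1))"
  define B where "B = (\<Prod>i\<in>{1..Suc m}. b (count_less n k i))"
  have "(\<Prod>r\<in>{1..n}. elem_sym (Suc m) \<alpha> (k r)) = (\<Prod>r\<in>{1..n}. h1 r + h0 r)"
    by (intro prod.cong) (simp_all add: elem_sym_Suc h0_def h1_def add.commute)
  also have "\<dots> = (\<Sum>W\<in>Pow {1..n}. (\<Prod>r\<in>W. h1 r) * (\<Prod>r\<in>{1..n} - W. h0 r))"
    by (simp add: prod_add_Pow)
  finally have expand: "merge_term (Suc m) n (elem_sym (Suc m) \<alpha>) b k
      = (\<Sum>W\<in>Pow {1..n}. (\<Prod>r\<in>W. h1 r) * (\<Prod>r\<in>{1..n} - W. h0 r) * B)"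
    unfolding merge_term_def B_def by (simp add: sum_distrib_right)
  have exch: "h1 r * h0 r' \<preceq> h0 r * h1 r'" if "k r \<le> k r'" for r r'
  proof (cases "k r = 0")
    case False
    then have "elem_sym m \<alpha> (k r - 1) * elem_sym m \<alpha> (k r') \<preceq> elem_sym m \<alpha> (k r) * elem_sym m \<alpha> (k r' - 1)"
      using that by (intro log_concave_step[OF log_concave_elem_sym]) simp_all
    then have "\<alpha> (Suc m) * (elem_sym m \<alpha> (k r - 1) * elem_sym m \<alpha> (k r'))
        \<preceq> \<alpha> (Suc m) * (elem_sym m \<alpha> (k r) * elem_sym m \<alpha> (k r' - 1))"
      by (rule mult_idem_mono[OF idem_le_refl])
    with False that show ?thesis
      by (simp add: h0_def h1_def mult_ac)
  qed (simp add: h1_def)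
  show "merge_term (Suc m) n (elem_sym (Suc m) \<alpha>) b k \<preceq> ?R"
    unfolding expand
  proof (rule sum_idem_le)
    fix W assume W: "W \<in> Pow {1..n}"
    then have "card W \<le> card {1..n}"
      by (intro card_mono) auto
    then obtain T where T: "T \<subseteq> {1..n}" "card T = card W" "\<forall>r\<in>T. \<forall>r'\<in>{1..n} - T. k r' \<le> k r"
      using exists_top_subset[of "{1..n}" "card W" k] by auto
    have "(\<Prod>r\<in>W. h1 r) * (\<Prod>r\<in>{1..n} - W. h0 r) \<preceq> (\<Prod>r\<in>T. h1 r) * (\<Prod>r\<in>{1..n} - T. h0 r)"
      using W T exch by (intro prod_exchange_le[of "{1..n}" T k]) auto
    then have "(\<Prod>r\<in>W. h1 r) * (\<Prod>r\<in>{1..n} - W. h0 r) * B \<preceq> (\<Prod>r\<in>T. h1 r) * (\<Prod>r\<in>{1..n} - T. h0 r) * B"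
      by (rule mult_right_idem_mono)
    also have "\<dots> \<preceq> ?R"
      unfolding h0_def h1_def B_def using b k T(1,3) by (rule merge_term_Suc_top_le)
    finally show "(\<Prod>r\<in>W. h1 r) * (\<Prod>r\<in>{1..n} - W. h0 r) * B \<preceq> ?R" .
  qed
qed

lemma merge_sum_le_prod_add:
  "merge_sum m n (elem_sym m \<alpha>) (elem_sym n \<beta>) \<preceq> (\<Prod>i\<in>{1..m}. \<Prod>j\<in>{1..n}. \<alpha> i + \<beta> j)"
proof (induction m)
  case 0
  have "merge_term 0 n (elem_sym 0 \<alpha>) (elem_sym n \<beta>) k = 1" if "k \<in> merge_patterns 0 n" for k
    using merge_patterns_le[OF that] by (simp add: merge_term_def)
  then have "merge_sum 0 n (elem_sym 0 \<alpha>) (elem_sym n \<beta>) \<preceq> 1"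
    unfolding merge_sum_def by (intro sum_idem_le) simp
  moreover have "(\<Prod>i\<in>{1..0::nat}. \<Prod>j\<in>{1..n}. \<alpha> i + \<beta> j) = 1"
    by simp
  ultimately show ?case
    by (simp only:)
next
  case (Suc m)
  let ?g = "\<Sum>l\<in>{0..n}. \<alpha> (Suc m) ^ (n - l) * elem_sym n \<beta> l"
  have "(\<Prod>j\<in>{1..n}. \<alpha> (Suc m) + \<beta> j) = ?g"
    by (rule prod_add_eq_elem_sym)
  then have split: "(\<Prod>i\<in>{1..Suc m}. \<Prod>j\<in>{1..n}. \<alpha> i + \<beta> j) = (\<Prod>i\<in>{1..m}. \<Prod>j\<in>{1..n}. \<alpha> i + \<beta> j) * ?g"
    by (simp only: prod.cl_ivl_Suc) simp
  show ?case
    unfolding split using merge_sum_Suc_le[OF log_concave_elem_sym] mult_right_idem_mono[OF Suc.IH]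
    by (rule idem_le_trans)
qed

theorem mainTheorem1:
  fixes m n :: nat and \<alpha> \<beta> :: "nat \<Rightarrow> 'a::comm_idem_semiring"
  assumes "m \<ge> 1" and "n \<ge> 1"
  shows "(\<Prod>i\<in>{1..m}. \<Prod>j\<in>{1..n}. \<alpha> i + \<beta> j)
         = per (m + n) (sylvester m n (elem_sym m \<alpha>) (elem_sym n \<beta>))"
proof (rule idem_le_antisym)
  show "(\<Prod>i\<in>{1..m}. \<Prod>j\<in>{1..n}. \<alpha> i + \<beta> j) \<preceq> per (m + n) (sylvester m n (elem_sym m \<alpha>) (elem_sym n \<beta>))"
    using prod_add_le_mono_merge_sum mono_merge_sum_le_per by (rule idem_le_trans)
  show "per (m + n) (sylvester m n (elem_sym m \<alpha>) (elem_sym n \<beta>)) \<preceq> (\<Prod>i\<in>{1..m}. \<Prod>j\<in>{1..n}. \<alpha> i + \<beta> j)"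
    using per_le_merge_sum[OF log_concave_elem_sym log_concave_elem_sym] merge_sum_le_prod_add
    by (rule idem_le_trans)
qed

end
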